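(* Let $P>2$ and $L$ be integers and let $\sigma,\tau\in\mathbb{Z}_P$ satisfy: (i) $\sigma,\tau\in\mathbb{Z}_P^{*}$; (ii) $L/2=\mathrm{ord}(\sigma)$; (iii) $2\le \mathrm{ord}(\sigma)$; (iv) $\mathrm{ord}(\sigma)\neq \#\mathbb{Z}_P^{*}$; (v) $1-\sigma^{j}\in\mathbb{Z}_P^{*}$ for all $1\le j<\mathrm{ord}(\sigma)$; (vi) $\tau\notin\{1,\sigma,\sigma^2,\dots,\sigma^{\mathrm{ord}(\sigma)-1}\}$. Define the $2P\times LP$ binary matrices $\hat H_C=(I(c_{j,\ell}))_{0\le j<2,\,0\le \ell<L}$ and $\hat H_D=(I(d_{j,\ell}))_{0\le j<2,\,0\le \ell<L}$ (block matrices with $P\times P$ blocks), where, with all arithmetic in $\mathbb{Z}_P$, $c_{j,\ell}=\sigma^{\ell-j}$ for $0\le\ell<L/2$ and $c_{j,\ell}=\tau\sigma^{\ell-j}$ for $L/2\le \ell<L$; $d_{j,\ell}=-\tau\sigma^{j-\ell}$ for $0\le\ell<L/2$ and $d_{j,\ell}=-\sigma^{j-\ell}$ for $L/2\le\ell<L$. Write $\hat H_C=(\hat c_{m,n})$, $\hat H_D=(\hat d_{m,n})$ with $0\le m<2P$, $0\le n<LP$. For a row index $0\le m'<2P$, let $N(m')=\{0\le n<LP \mid \hat d_{m',n}\neq 0\}$ (the support of the $m'$-th row of $\hat H_D$) and $E(m')=\{(m,n)\mid \hat c_{m,n}\neq 0,\ n\in N(m')\}$. Then for every $0\le m'<2P$,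 the $L$ variable nodes of the Tanner graph of $\hat H_C$ corresponding to the columns in $N(m')$, together with their adjacent check nodes, form a cycle of length $2L$. More precisely, there exist $L$ distinct row indices $m_0,\dots,m_{L-1}$ and $L$ distinct column indices $n_0,\dots,n_{L-1}$ such that $$\{(m_{2i-1},n_{2i}),\ (m_{2i},n_{2i}),\ (m_{2i},n_{2i+1}),\ (m_{2i+1},n_{2i+1}) \mid 0\le i<L/2\}=E(m'),$$ where $m_{-1}:=m_{L-1}$.
   Context: Rows and columns are indexed from $0$. $\mathbb{Z}_P^{*}=\{z\in\mathbb{Z}_P\mid \exists a\in\mathbb{Z}_P,\ za=1\}$ is the group of units of $\mathbb{Z}_P$, and $\mathrm{ord}(\sigma)=\min\{m>0\mid \sigma^m=1\}$; negative powers of $\sigma$ are taken in $\mathbb{Z}_P^{*}$. $I(1)$ is the $P\times P$ binary cyclic permutation matrix whose $r$-th row has its single $1$ in column $r+1 \bmod P$, and $I(c):=I(1)^{c}$ for $c\in\mathbb{Z}_P$ (so row $r$ of $I(c)$ has its single $1$ in column $r+c\bmod P$). The Tanner graph of a binary matrix $H$ is the bipartite graph with one check node per row, one variable node per column, and an edge between check node $m$ and variable node $n$ iff the $(m,n)$ entry of $H$ is nonzero. *)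

theory Defs
  imports "HOL-Number_Theory.Cong"
begin

text \<open>Elements of Z_P are represented by integers in {0..<P}; arithmetic is taken mod P.\<close>

definition zunit :: "nat \<Rightarrow> int \<Rightarrow> bool" where
  "zunit P z \<longleftrightarrow> (\<exists>a::int. [z * a = 1] (mod int P))"

definition zord :: "nat \<Rightarrow> int \<Rightarrow> nat" where
  "zord P s = (LEAST m. m > 0 \<and> [s ^ m = 1] (mod int P))"

definition zinv :: "nat \<Rightarrow> int \<Rightarrow> int" where
  "zinv P s = (SOME a. 0 \<le> a \<and> a < int P \<and> [s * a = 1] (mod int P))"

definition zpow :: "nat \<Rightarrow> int \<Rightarrow> int \<Rightarrow> int" where
  "zpow P s k = (if k \<ge> 0 then s ^ nat k mod int P else (zinv P s) ^ nat (- k) mod int P)"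

text \<open>Entry (r,k) of the P x P circulant permutation matrix I(c): 1 iff k = r + c mod P.\<close>
definition circ :: "nat \<Rightarrow> int \<Rightarrow> nat \<Rightarrow> nat \<Rightarrow> nat" where
  "circ P c r k = (if int k = (int r + c) mod int P then 1 else 0)"

definition blockmat :: "nat \<Rightarrow> (nat \<Rightarrow> nat \<Rightarrow> int) \<Rightarrow> nat \<Rightarrow> nat \<Rightarrow> nat" where
  "blockmat P e m n = circ P (e (m div P) (n div P)) (m mod P) (n mod P)"

definition cexp :: "nat \<Rightarrow> nat \<Rightarrow> int \<Rightarrow> int \<Rightarrow> nat \<Rightarrow> nat \<Rightarrow> int" where
  "cexp P L s t j l = (if l < L div 2 then zpow P s (int l - int j)
                       else (t * zpow P s (int l - int j)) mod int P)"

definition dexp :: "nat \<Rightarrow> nat \<Rightarrow> int \<Rightarrow> int \<Rightarrow> nat \<Rightarrow> nat \<Rightarrow> int" where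
  "dexp P L s t j l = (if l < L div 2 then (- (t * zpow P s (int j - int l))) mod int P
                       else (- zpow P s (int j - int l)) mod int P)"

definition HC :: "nat \<Rightarrow> nat \<Rightarrow> int \<Rightarrow> int \<Rightarrow> nat \<Rightarrow> nat \<Rightarrow> nat" where
  "HC P L s t = blockmat P (cexp P L s t)"

definition HD :: "nat \<Rightarrow> nat \<Rightarrow> int \<Rightarrow> int \<Rightarrow> nat \<Rightarrow> nat \<Rightarrow> nat" where
  "HD P L s t = blockmat P (dexp P L s t)"

definition Nsupp :: "nat \<Rightarrow> nat \<Rightarrow> int \<Rightarrow> int \<Rightarrow> nat \<Rightarrow> nat set" where
  "Nsupp P L s t m' = {n. n < L * P \<and> HD P L s t m' n \<noteq> 0}"

definition Eset :: "nat \<Rightarrow> nat \<Rightarrow> int \<Rightarrow> int \<Rightarrow> nat \<Rightarrow> (nat \<times> nat) set" where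
  "Eset P L s t m' = {(m, n). m < 2 * P \<and> n < L * P \<and> HC P L s t m n \<noteq> 0 \<and> n \<in> Nsupp P L s t m'}"

end

theory Submission
  imports Defs "HOL-Number_Theory.Number_Theory"
begin

(* Row m' of H_D meets block column l in exactly one column n_l, and column n_l meets block
   row j of H_C in exactly one check node, determined by the exponent difference
   d(j',l) - c(j,l) mod P, where j' is the block row of m'.  So E(m') consists of the 2L edges
   (row_j(l), n_l).  By (v) and (vi) the L/2 lower columns l < L/2 have pairwise distinct check
   nodes in each block row, while the upper column L/2 + u with u = j' - i (mod L/2) shares its
   check node in block row 0 with the lower column i and in block row 1 with the lower column
   i + 1.  Alternating lower and upper columns thus traverses all 2L edges as one cycle. *)

section \<open>Powers of a unit modulo P\<close>

lemma zunit_iff_coprime: "zunit P z \<longleftrightarrow> coprime z (int P)"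
  by (simp add: zunit_def coprime_iff_invertible_int)

context
  fixes P :: nat and s :: int
  assumes P: "1 < P" and s_unit: "zunit P s"
begin

lemma zord_pos_pow_cong_1: "0 < zord P s \<and> [s ^ zord P s = 1] (mod int P)"
proof -
  have "residues (int P)" using P by (simp add: residues_def)
  then have "[s ^ totient P = 1] (mod int P)"
    using residues.euler_theorem[of "int P" s] s_unit by (simp add: zunit_iff_coprime)
  moreover have "0 < totient P" using P by simp
  ultimately show ?thesis
    unfolding zord_def by (intro LeastI[of "\<lambda>m. 0 < m \<and> [s ^ m = 1] (mod int P)" "totient P"]) simp
qed

lemma zord_pos: "0 < zord P s"
  using zord_pos_pow_cong_1 by simp

lemma pow_zord_cong_1: "[s ^ zord P s = 1] (mod int P)"
  using zord_pos_pow_cong_1 by simp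

lemma pow_cong_pow_mod_zord: "[s ^ n = s ^ (n mod zord P s)] (mod int P)"
proof -
  have "s ^ n = (s ^ zord P s) ^ (n div zord P s) * s ^ (n mod zord P s)"
    by (simp flip: power_mult power_add)
  also have "[\<dots> = 1 ^ (n div zord P s) * s ^ (n mod zord P s)] (mod int P)"
    by (intro cong_mult cong_pow pow_zord_cong_1 cong_refl)
  finally show ?thesis by simp
qed

lemma zinv_cong_pow: "[zinv P s = s ^ (zord P s - 1)] (mod int P)"
proof -
  obtain a where a: "[s * a = 1] (mod int P)"
    using s_unit unfolding zunit_def by blast
  have "\<exists>b. 0 \<le> b \<and> b < int P \<and> [s * b = 1] (mod int P)"
    using a P by (intro exI[of _ "a mod int P"]) (auto simp: cong_def mod_mult_right_eq)
  then have inv: "[s * zinv P s = 1] (mod int P)"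
    unfolding zinv_def by (rule someI2_ex) simp
  have "[zinv P s = zinv P s * s ^ zord P s] (mod int P)"
    using cong_scalar_left[OF pow_zord_cong_1, of "zinv P s"] by (simp add: cong_sym)
  also have "zinv P s * s ^ zord P s = (s * zinv P s) * s ^ (zord P s - 1)"
    using zord_pos by (simp add: power_eq_if)
  also have "[\<dots> = 1 * s ^ (zord P s - 1)] (mod int P)"
    by (intro cong_mult inv cong_refl)
  finally show ?thesis by simp
qed

lemma zpow_eq_pow_mod_zord: "zpow P s k = s ^ nat (k mod int (zord P s)) mod int P"
proof -
  let ?K = "zord P s"
  have "[zpow P s k = s ^ nat (k mod int ?K)] (mod int P)"
  proof (cases "0 \<le> k")
    case True
    then have "nat k mod ?K = nat (k mod int ?K)"
      by (simp add: nat_mod_distrib)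
    with True show ?thesis
      using pow_cong_pow_mod_zord[of "nat k"] by (simp add: zpow_def cong_def)
  next
    case False
    define n where "n = nat (- k)"
    have "[zpow P s k = (s ^ (?K - 1)) ^ n] (mod int P)"
      using False cong_pow[OF zinv_cong_pow, of n] by (simp add: zpow_def n_def cong_def)
    also have "[(s ^ (?K - 1)) ^ n = s ^ ((?K - 1) * n mod ?K)] (mod int P)"
      by (simp add: pow_cong_pow_mod_zord flip: power_mult)
    also have "(?K - 1) * n mod ?K = nat (k mod int ?K)"
    proof -
      have "int ((?K - 1) * n) = k + int ?K * (- k - 1) + int ?K"
        using False zord_pos by (simp add: n_def of_nat_diff algebra_simps)
      then have "int ((?K - 1) * n mod ?K) = k mod int ?K"
        by (simp add: zmod_int)
      then show ?thesis by simp
    qed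
    finally show ?thesis .
  qed
  then show ?thesis
    by (simp add: cong_def zpow_def mod_mod_trivial split: if_splits)
qed

lemma zpow_eq_if_cong: "[a = b] (mod int (zord P s)) \<Longrightarrow> zpow P s a = zpow P s b"
  by (simp add: zpow_eq_pow_mod_zord cong_def)

lemma zpow_of_nat: "n < zord P s \<Longrightarrow> zpow P s (int n) = s ^ n mod int P"
  by (simp add: zpow_eq_pow_mod_zord)

lemma zpow_mem_powers: "zpow P s k \<in> {s ^ i mod int P | i. i < zord P s}"
  using zord_pos by (auto simp: zpow_eq_pow_mod_zord nat_less_iff)

lemma zpow_add: "[zpow P s (a + b) = zpow P s a * zpow P s b] (mod int P)"
proof -
  let ?K = "zord P s"
  have "[zpow P s a * zpow P s b = s ^ (nat (a mod int ?K) + nat (b mod int ?K))] (mod int P)"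
    by (simp add: zpow_eq_pow_mod_zord cong_def mod_mult_eq power_add)
  also have "[s ^ (nat (a mod int ?K) + nat (b mod int ?K))
      = s ^ ((nat (a mod int ?K) + nat (b mod int ?K)) mod ?K)] (mod int P)"
    by (rule pow_cong_pow_mod_zord)
  also have "(nat (a mod int ?K) + nat (b mod int ?K)) mod ?K = nat ((a + b) mod int ?K)"
  proof -
    have "int ((nat (a mod int ?K) + nat (b mod int ?K)) mod ?K) = (a mod int ?K + b mod int ?K) mod int ?K"
      using zord_pos by (simp add: zmod_int)
    then show ?thesis by (simp add: mod_add_eq)
  qed
  finally show ?thesis
    by (simp add: zpow_eq_pow_mod_zord cong_def cong_sym_eq)
qed

end

section \<open>Supports of block-circulant matrices\<close>

(* Row m of blockmat P e has its unique 1 in block column l at column blockmat_col P e m l;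
   column n has its unique 1 in block row j at row blockmat_row P e n j. *)
definition blockmat_col :: "nat \<Rightarrow> (nat \<Rightarrow> nat \<Rightarrow> int) \<Rightarrow> nat \<Rightarrow> nat \<Rightarrow> nat" where
  "blockmat_col P e m l = l * P + nat ((int (m mod P) + e (m div P) l) mod int P)"

definition blockmat_row :: "nat \<Rightarrow> (nat \<Rightarrow> nat \<Rightarrow> int) \<Rightarrow> nat \<Rightarrow> nat \<Rightarrow> nat" where
  "blockmat_row P e n j = j * P + nat ((int (n mod P) - e j (n div P)) mod int P)"

context
  fixes P :: nat
  assumes P: "0 < P"
begin

lemma nat_mod_int_less: "nat (x mod int P) < P"
  using P by (simp add: nat_less_iff)

lemma blockmat_col_div: "blockmat_col P e m l div P = l"
  and blockmat_col_mod: "int (blockmat_col P e m l mod P) = (int (m mod P) + e (m div P) l) mod int P"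
  unfolding blockmat_col_def using nat_mod_int_less P by auto

lemma blockmat_row_div: "blockmat_row P e n j div P = j"
  and blockmat_row_mod: "int (blockmat_row P e n j mod P) = (int (n mod P) - e j (n div P)) mod int P"
  unfolding blockmat_row_def using nat_mod_int_less P by auto

lemma blockmat_nonzero_iff_col: "blockmat P e m n \<noteq> 0 \<longleftrightarrow> n = blockmat_col P e m (n div P)"
proof -
  have "n = blockmat_col P e m (n div P) \<longleftrightarrow> int (n mod P) = (int (m mod P) + e (m div P) (n div P)) mod int P"
    by (metis blockmat_col_div blockmat_col_mod div_mult_mod_eq of_nat_eq_iff)
  then show ?thesis
    by (simp add: blockmat_def circ_def)
qed

lemma blockmat_nonzero_iff_row: "blockmat P e m n \<noteq> 0 \<longleftrightarrow> m = blockmat_row P e n (m div P)"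
proof -
  have "m = blockmat_row P e n (m div P) \<longleftrightarrow> int (m mod P) = (int (n mod P) - e (m div P) (n div P)) mod int P"
    by (metis blockmat_row_div blockmat_row_mod div_mult_mod_eq of_nat_eq_iff)
  also have "\<dots> \<longleftrightarrow> int (n mod P) = (int (m mod P) + e (m div P) (n div P)) mod int P"
    using P by (auto simp: mod_diff_left_eq mod_add_left_eq)
  finally show ?thesis
    by (simp add: blockmat_def circ_def)
qed

lemma blockmat_row_support:
  "{m. m < J * P \<and> blockmat P e m n \<noteq> 0} = blockmat_row P e n ` {..<J}"
proof -
  have "m < J * P \<longleftrightarrow> m div P < J" for m
    using P by (simp add: less_mult_imp_div_less div_less_iff_less_mult)
  then show ?thesis
    using blockmat_nonzero_iff_row blockmat_row_div by (auto intro!: image_eqI)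
qed

lemma blockmat_col_support:
  "{n. n < L * P \<and> blockmat P e m n \<noteq> 0} = blockmat_col P e m ` {..<L}"
proof -
  have "n < L * P \<longleftrightarrow> n div P < L" for n
    using P by (simp add: less_mult_imp_div_less div_less_iff_less_mult)
  then show ?thesis
    using blockmat_nonzero_iff_col blockmat_col_div by (auto intro!: image_eqI)
qed

lemma blockmat_row_col:
  "blockmat_row P c (blockmat_col P d m l) j = j * P + nat ((int (m mod P) + (d (m div P) l - c j l)) mod int P)"
proof -
  have "(int (blockmat_col P d m l mod P) - c j l) mod int P = (int (m mod P) + (d (m div P) l - c j l)) mod int P"
    unfolding blockmat_col_mod by (simp add: mod_diff_left_eq algebra_simps)
  then show ?thesis
    by (simp add: blockmat_row_def blockmat_col_div)
qed

lemma blockmat_row_col_eq_iff: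
  "blockmat_row P c (blockmat_col P d m l) j = blockmat_row P c (blockmat_col P d m l') j'
   \<longleftrightarrow> j = j' \<and> [d (m div P) l - c j l = d (m div P) l' - c j' l'] (mod int P)"
proof -
  let ?x = "int (m mod P) + (d (m div P) l - c j l)"
  let ?y = "int (m mod P) + (d (m div P) l' - c j' l')"
  have "blockmat_row P c (blockmat_col P d m l) j = blockmat_row P c (blockmat_col P d m l') j'
    \<longleftrightarrow> j = j' \<and> nat (?x mod int P) = nat (?y mod int P)"
    by (metis blockmat_row_col blockmat_row_div add_left_cancel)
  also have "\<dots> \<longleftrightarrow> j = j' \<and> [?x = ?y] (mod int P)"
    using P by (simp add: cong_def nat_eq_iff)
  finally show ?thesis
    by (simp only: cong_add_lcancel)
qed

lemma Eset_eq:
  "Eset P L s t m' = {(blockmat_row P (cexp P L s t) (blockmat_col P (dexp P L s t) m' l) j,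
                      blockmat_col P (dexp P L s t) m' l) | j l. j < 2 \<and> l < L}"
proof -
  have rows: "m < 2 * P \<and> HC P L s t m n \<noteq> 0 \<longleftrightarrow> m \<in> blockmat_row P (cexp P L s t) n ` {..<2}" for m n
    using blockmat_row_support[of 2 "cexp P L s t" n] unfolding HC_def by blast
  have cols: "n \<in> Nsupp P L s t m' \<longleftrightarrow> n \<in> blockmat_col P (dexp P L s t) m' ` {..<L}" for n
    using blockmat_col_support[of L "dexp P L s t" m'] unfolding Nsupp_def HD_def by blast
  have "Eset P L s t m' = {(m, n). n \<in> blockmat_col P (dexp P L s t) m' ` {..<L} \<and>
                                   m \<in> blockmat_row P (cexp P L s t) n ` {..<2}}"
    unfolding Eset_def using rows cols unfolding Nsupp_def by blast
  then show ?thesis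
    by blast
qed

end

section \<open>The cycle through the support of a row of H_D\<close>

locale cycle_parameters =
  fixes P :: nat and s t :: int and K :: nat
  assumes P: "1 < P" and s_unit: "zunit P s" and t_range: "0 \<le> t" "t < int P"
    and K: "K = zord P s"
    and one_minus_pow_unit: "\<forall>j. 1 \<le> j \<and> j < K \<longrightarrow> zunit P ((1 - s ^ j) mod int P)"
    and t_not_pow: "t \<notin> {s ^ k mod int P | k. k < K}"
begin

abbreviation L :: nat where "L \<equiv> 2 * K"

lemma K_pos: "0 < K"
  using zord_pos[OF P s_unit] K by simp

lemma P_pos: "0 < P"
  using P by simp

definition exp_diff :: "nat \<Rightarrow> nat \<Rightarrow> nat \<Rightarrow> int" where
  "exp_diff jj j l = dexp P L s t jj l - cexp P L s t j l"

lemma exp_diff_lower: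
  "l < K \<Longrightarrow> [exp_diff jj j l = - (t * zpow P s (int jj - int l)) - zpow P s (int l - int j)] (mod int P)"
  by (simp add: exp_diff_def dexp_def cexp_def cong_def mod_diff_left_eq)

lemma exp_diff_upper:
  "K \<le> l \<Longrightarrow> [exp_diff jj j l = - zpow P s (int jj - int l) - t * zpow P s (int l - int j)] (mod int P)"
  by (simp add: exp_diff_def dexp_def cexp_def cong_def mod_diff_eq)

lemma exp_diff_upper_eq_lower:
  assumes u: "[int u = int jj - int i] (mod int K)" and i': "[int i' = int i + int j] (mod int K)" "i' < K"
  shows "[exp_diff jj j (K + u) = exp_diff jj j i'] (mod int P)"
proof -
  obtain q q' where q: "int jj - int i = int u + int K * q" and q': "int i + int j = int i' + int K * q'"
    using u i'(1) unfolding cong_iff_lin by blast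
  have "int i' - int j = int jj - int (K + u) + int K * (1 - q - q')"
    using q q' by (simp add: algebra_simps)
  then have "zpow P s (int jj - int (K + u)) = zpow P s (int i' - int j)"
    by (intro zpow_eq_if_cong[OF P s_unit]) (auto simp: K[symmetric] cong_iff_lin)
  moreover have "int jj - int i' = int (K + u) - int j + int K * (q + q' - 1)"
    using q q' by (simp add: algebra_simps)
  then have "zpow P s (int (K + u) - int j) = zpow P s (int jj - int i')"
    by (intro zpow_eq_if_cong[OF P s_unit]) (auto simp: K[symmetric] cong_iff_lin)
  ultimately have "[exp_diff jj j (K + u)
      = - zpow P s (int i' - int j) - t * zpow P s (int jj - int i')] (mod int P)"
    using exp_diff_upper[of "K + u" jj j] by simp
  also have "- zpow P s (int i' - int j) - t * zpow P s (int jj - int i')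
      = - (t * zpow P s (int jj - int i')) - zpow P s (int i' - int j)"
    by simp
  also note exp_diff_lower[OF i'(2), THEN cong_sym]
  finally show ?thesis .
qed

lemma pow_diff_coprime:
  assumes "i < K" "i' < K" "i \<noteq> i'"
  shows "coprime (s ^ i - s ^ i') (int P)"
proof -
  have ordered: "coprime (s ^ a - s ^ b) (int P)" if "a < b" "b < K" for a b
  proof -
    have "1 \<le> b - a \<and> b - a < K"
      using that by auto
    then have "zunit P ((1 - s ^ (b - a)) mod int P)"
      using one_minus_pow_unit by blast
    then have "coprime (1 - s ^ (b - a)) (int P)"
      using P by (simp add: zunit_iff_coprime)
    moreover have "coprime s (int P)"
      using s_unit by (simp add: zunit_iff_coprime)
    moreover have "s ^ a - s ^ b = s ^ a * (1 - s ^ (b - a))"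
      using that by (simp add: algebra_simps flip: power_add)
    ultimately show ?thesis by simp
  qed
  show ?thesis
  proof (cases "i < i'")
    case True
    then show ?thesis using ordered assms(2) by simp
  next
    case False
    then have "coprime (s ^ i' - s ^ i) (int P)"
      using ordered[of i' i] assms by simp
    then show ?thesis
      using coprime_minus_left_iff[of "s ^ i' - s ^ i"] by simp
  qed
qed

lemma exp_diff_lower_scaled:
  fixes a b j jj :: nat
  assumes "a < K"
  defines "W \<equiv> zpow P s (int a + int b - int j - int jj)"
  shows "[exp_diff jj j a * (zpow P s (int j) * W) = - (t * zpow P s (int b)) - zpow P s (int a) * W] (mod int P)"
proof -
  let ?X = "zpow P s"
  have X2: "[?X x * ?X y = ?X (x + y)] (mod int P)" for x y
    using zpow_add[OF P s_unit] by (rule cong_sym)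
  have "int jj - int a + (int j + (int a + int b - int j - int jj)) = int b"
    by simp
  then have c1: "[?X (int jj - int a) * (?X (int j) * W) = ?X (int b)] (mod int P)"
    unfolding W_def
    using cong_trans[OF cong_scalar_left[OF X2[of "int j" "int a + int b - int j - int jj"]]
        X2[of "int jj - int a" "int j + (int a + int b - int j - int jj)"]]
    by (simp only:)
  have c2: "[?X (int a - int j) * (?X (int j) * W) = ?X (int a) * W] (mod int P)"
    using cong_scalar_right[OF X2[of "int a - int j" "int j"], of W] by (simp add: mult.assoc)
  have "[exp_diff jj j a * (?X (int j) * W)
      = (- (t * ?X (int jj - int a)) - ?X (int a - int j)) * (?X (int j) * W)] (mod int P)"
    by (rule cong_scalar_right[OF exp_diff_lower[OF assms(1)]])
  also have "(- (t * ?X (int jj - int a)) - ?X (int a - int j)) * (?X (int j) * W)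
      = - (t * (?X (int jj - int a) * (?X (int j) * W))) - ?X (int a - int j) * (?X (int j) * W)"
    by (simp add: algebra_simps)
  also have "[\<dots> = - (t * ?X (int b)) - ?X (int a) * W] (mod int P)"
    by (intro cong_diff cong_uminus cong_scalar_left c1 c2)
  finally show ?thesis .
qed

(* Scaling by s^j W, with W = s^(i+i'-j-jj), turns the congruence into (W - t)(s^i' - s^i) = 0
   mod P; by (v) the second factor is a unit, so t = W is a power of s, contradicting (vi). *)
lemma exp_diff_lower_inj:
  assumes i: "i < K" "i' < K" and eq: "[exp_diff jj j i = exp_diff jj j i'] (mod int P)"
  shows "i = i'"
proof (rule ccontr)
  assume "i \<noteq> i'"
  let ?X = "zpow P s"
  define W where "W = ?X (int i + int i' - int j - int jj)"
  have W': "W = ?X (int i' + int i - int j - int jj)"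
    by (simp add: W_def add.commute)
  have scaled: "[exp_diff jj j i * (?X (int j) * W) = exp_diff jj j i' * (?X (int j) * W)] (mod int P)"
    using eq by (rule cong_scalar_right)
  have "[- (t * ?X (int i')) - ?X (int i) * W = - (t * ?X (int i)) - ?X (int i') * W] (mod int P)"
    using cong_trans[OF cong_sym[OF exp_diff_lower_scaled[OF i(1), where b = i' and j = j and jj = jj, folded W_def]]
        cong_trans[OF scaled exp_diff_lower_scaled[OF i(2), where b = i and j = j and jj = jj, folded W']]] .
  moreover have "(- (t * ?X (int i')) - ?X (int i) * W) - (- (t * ?X (int i)) - ?X (int i') * W)
      = (W - t) * (?X (int i') - ?X (int i))"
    by (simp add: algebra_simps)
  ultimately have "int P dvd (W - t) * (?X (int i') - ?X (int i))"
    by (simp add: cong_iff_dvd_diff)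
  moreover have "coprime (int P) (?X (int i') - ?X (int i))"
  proof -
    have "[s ^ i' - s ^ i = ?X (int i') - ?X (int i)] (mod int P)"
      using i by (simp add: zpow_of_nat[OF P s_unit] K cong_def mod_diff_eq)
    then show ?thesis
      using cong_imp_coprime pow_diff_coprime[OF i(2,1)] \<open>i \<noteq> i'\<close> coprime_commute by blast
  qed
  ultimately have "W mod int P = t mod int P"
    by (simp add: coprime_dvd_mult_left_iff mod_eq_dvd_iff)
  then have "t = W"
    using t_range P by (simp add: W_def zpow_def)
  then show False
    using t_not_pow zpow_mem_powers[OF P s_unit] K by (auto simp: W_def)
qed

definition partner :: "nat \<Rightarrow> nat \<Rightarrow> nat" where
  "partner jj i = K + nat ((int jj - int i) mod int K)"

lemma partner_bounds: "K \<le> partner jj i" "partner jj i < L"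
  using K_pos by (simp_all add: partner_def nat_less_iff)

lemma exp_diff_partner:
  "i < K \<Longrightarrow> [exp_diff jj j (partner jj i) = exp_diff jj j ((i + j) mod K)] (mod int P)"
  unfolding partner_def using K_pos
  by (intro exp_diff_upper_eq_lower) (simp_all add: cong_def zmod_int)

lemma partner_inj_on: "inj_on (partner jj) {..<K}"
proof (rule inj_onI)
  fix i i' assume "i \<in> {..<K}" "i' \<in> {..<K}" "partner jj i = partner jj i'"
  then have "(int jj - int i) mod int K = (int jj - int i') mod int K" "i < K" "i' < K"
    using K_pos by (simp_all add: partner_def eq_nat_nat_iff)
  then have "int K dvd int i' - int i"
    by (simp add: mod_eq_dvd_iff)
  then have "int i' mod int K = int i mod int K"
    by (simp only: mod_eq_dvd_iff)
  with \<open>i < K\<close> \<open>i' < K\<close> show "i = i'" by simp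
qed

lemma lower_union_partner: "(\<Union>i<K. {i, partner jj i}) = {..<L}"
proof -
  have "partner jj ` {..<K} \<subseteq> {K..<L}"
    using partner_bounds by auto
  moreover have "card (partner jj ` {..<K}) = card {K..<L}"
    using partner_inj_on by (simp add: card_image)
  ultimately have "partner jj ` {..<K} = {K..<L}"
    by (simp add: card_subset_eq)
  then have "{..<L} = {..<K} \<union> partner jj ` {..<K}"
    by auto
  then show ?thesis
    by blast
qed

definition var_col :: "nat \<Rightarrow> nat \<Rightarrow> nat" where
  "var_col m' l = blockmat_col P (dexp P L s t) m' l"

definition check_row :: "nat \<Rightarrow> nat \<Rightarrow> nat \<Rightarrow> nat" where
  "check_row m' j l = blockmat_row P (cexp P L s t) (var_col m' l) j"

lemma Eset_eq_check_rows: "Eset P L s t m' = {(check_row m' j l, var_col m' l) | j l. j < 2 \<and> l < L}"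
  unfolding check_row_def var_col_def by (rule Eset_eq[OF P_pos])

lemma var_col_inj: "var_col m' l = var_col m' l' \<Longrightarrow> l = l'"
  unfolding var_col_def by (metis blockmat_col_div[OF P_pos])

lemma check_row_eq_iff:
  "check_row m' j l = check_row m' j' l'
   \<longleftrightarrow> j = j' \<and> [exp_diff (m' div P) j l = exp_diff (m' div P) j' l'] (mod int P)"
  unfolding check_row_def var_col_def exp_diff_def by (rule blockmat_row_col_eq_iff[OF P_pos])

lemma check_row_partner:
  "i < K \<Longrightarrow> check_row m' j (partner (m' div P) i) = check_row m' j ((i + j) mod K)"
  using check_row_eq_iff exp_diff_partner by blast

definition walk_row :: "nat \<Rightarrow> nat \<Rightarrow> nat" where
  "walk_row m' k = check_row m' (k mod 2) ((k div 2 + k mod 2) mod K)"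

definition walk_col :: "nat \<Rightarrow> nat \<Rightarrow> nat" where
  "walk_col m' k = var_col m' (if even k then k div 2 else partner (m' div P) (k div 2))"

lemma walk_block:
  assumes "i < K"
  shows "{(walk_row m' ((2*i + L - 1) mod L), walk_col m' (2*i)), (walk_row m' (2*i), walk_col m' (2*i)),
          (walk_row m' (2*i), walk_col m' (2*i+1)), (walk_row m' (2*i+1), walk_col m' (2*i+1))}
       = {(check_row m' j l, var_col m' l) | j l. j < 2 \<and> l \<in> {i, partner (m' div P) i}}"
proof -
  let ?p = "partner (m' div P) i"
  have "(2*i + L - 1) mod L = 2 * ((i + K - 1) mod K) + 1"
  proof (cases "i = 0")
    case True
    then show ?thesis using K_pos by simp
  next
    case False
    then have "2*i + L - 1 = (2 * (i - 1) + 1) + L" "i + K - 1 = i - 1 + K"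
      by simp_all
    then have "(2*i + L - 1) mod L = 2 * (i - 1) + 1" "(i + K - 1) mod K = i - 1"
      using assms by (simp_all only: mod_add_self2) simp_all
    then show ?thesis by simp
  qed
  moreover have "((i + K - 1) mod K + 1) mod K = i"
    using assms K_pos by (simp add: mod_Suc_eq)
  ultimately have "walk_row m' ((2*i + L - 1) mod L) = check_row m' 1 i"
    by (simp add: walk_row_def)
  moreover have "walk_row m' (2*i) = check_row m' 0 i" "check_row m' 0 ?p = check_row m' 0 i"
    using check_row_partner[OF assms, of m' 0] assms by (simp_all add: walk_row_def)
  moreover have "walk_row m' (2*i+1) = check_row m' 1 ?p"
    using check_row_partner[OF assms, of m' 1] by (simp add: walk_row_def)
  moreover have "walk_col m' (2*i) = var_col m' i" "walk_col m' (2*i+1) = var_col m' ?p"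
    by (simp_all add: walk_col_def)
  moreover have "{(check_row m' j l, var_col m' l) | j l. j < 2 \<and> l \<in> {i, ?p}}
      = {(check_row m' 1 i, var_col m' i), (check_row m' 0 i, var_col m' i),
         (check_row m' 0 ?p, var_col m' ?p), (check_row m' 1 ?p, var_col m' ?p)}"
    by (auto simp: less_2_cases_iff)
  ultimately show ?thesis
    by simp
qed

lemma walk_covers_Eset:
  "(\<Union>i<L div 2. {(walk_row m' ((2*i + L - 1) mod L), walk_col m' (2*i)), (walk_row m' (2*i), walk_col m' (2*i)),
                   (walk_row m' (2*i), walk_col m' (2*i+1)), (walk_row m' (2*i+1), walk_col m' (2*i+1))})
   = Eset P L s t m'"
proof -
  have "(\<Union>i<L div 2. {(walk_row m' ((2*i + L - 1) mod L), walk_col m' (2*i)), (walk_row m' (2*i), walk_col m' (2*i)),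
                   (walk_row m' (2*i), walk_col m' (2*i+1)), (walk_row m' (2*i+1), walk_col m' (2*i+1))})
    = {(check_row m' j l, var_col m' l) | j l. j < 2 \<and> l \<in> (\<Union>i<K. {i, partner (m' div P) i})}"
    using walk_block by auto
  then show ?thesis
    unfolding Eset_eq_check_rows lower_union_partner by simp
qed

lemma walk_row_inj_on: "inj_on (walk_row m') {..<L}"
proof (rule inj_onI)
  fix k k' assume k: "k \<in> {..<L}" "k' \<in> {..<L}" and eq: "walk_row m' k = walk_row m' k'"
  then have parity: "k mod 2 = k' mod 2"
    and "[exp_diff (m' div P) (k' mod 2) ((k div 2 + k' mod 2) mod K)
        = exp_diff (m' div P) (k' mod 2) ((k' div 2 + k' mod 2) mod K)] (mod int P)"
    unfolding walk_row_def check_row_eq_iff by auto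
  then have "(k div 2 + k' mod 2) mod K = (k' div 2 + k' mod 2) mod K"
    using K_pos by (intro exp_diff_lower_inj) simp_all
  then have "[k div 2 + k' mod 2 = k' div 2 + k' mod 2] (mod K)"
    by (simp only: cong_def)
  then have "[k div 2 = k' div 2] (mod K)"
    by (simp only: cong_add_rcancel_nat)
  then have "k div 2 = k' div 2"
    using k by (simp add: cong_def)
  then show "k = k'"
    using parity by (metis div_mult_mod_eq)
qed

lemma walk_col_inj_on: "inj_on (walk_col m') {..<L}"
proof (rule inj_onI)
  fix k k' assume k: "k \<in> {..<L}" "k' \<in> {..<L}" and "walk_col m' k = walk_col m' k'"
  from \<open>walk_col m' k = walk_col m' k'\<close> have eq: "(if even k then k div 2 else partner (m' div P) (k div 2))
               = (if even k' then k' div 2 else partner (m' div P) (k' div 2))"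
    unfolding walk_col_def by (rule var_col_inj)
  have lt: "k div 2 < K" "k' div 2 < K"
    using k by (simp_all add: less_mult_imp_div_less mult.commute)
  show "k = k'"
  proof (cases "even k"; cases "even k'")
    assume "even k" "even k'"
    with eq have "k div 2 = k' div 2" by simp
    with \<open>even k\<close> \<open>even k'\<close> show ?thesis by (metis dvd_mult_div_cancel)
  next
    assume "even k" "odd k'"
    with eq lt partner_bounds(1)[of "m' div P" "k' div 2"] show ?thesis by simp
  next
    assume "odd k" "even k'"
    with eq lt partner_bounds(1)[of "m' div P" "k div 2"] show ?thesis by simp
  next
    assume "odd k" "odd k'"
    with eq have "partner (m' div P) (k div 2) = partner (m' div P) (k' div 2)"
      by simp
    then have "k div 2 = k' div 2"
      by (rule inj_onD[OF partner_inj_on]) (use lt in simp_all)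
    with \<open>odd k\<close> \<open>odd k'\<close> show ?thesis by (metis odd_two_times_div_two_succ)
  qed
qed

lemma walk_in_Eset: "k < L \<Longrightarrow> (walk_row m' k, walk_col m' k) \<in> Eset P L s t m'"
proof -
  assume "k < L"
  then have "k div 2 < L div 2"
    by (simp add: less_mult_imp_div_less mult.commute)
  moreover have "(walk_row m' k, walk_col m' k)
    \<in> {(walk_row m' ((2*i + L - 1) mod L), walk_col m' (2*i)), (walk_row m' (2*i), walk_col m' (2*i)),
        (walk_row m' (2*i), walk_col m' (2*i+1)), (walk_row m' (2*i+1), walk_col m' (2*i+1))}"
    if "i = k div 2" for i
  proof (cases "even k")
    case True
    then have "2 * i = k" using that by simp
    then show ?thesis by simp
  next
    case False
    then have "2 * i + 1 = k" using that by simp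
    then show ?thesis by simp
  qed
  ultimately show ?thesis
    unfolding walk_covers_Eset[symmetric] by blast
qed

lemma Eset_is_cycle:
  "\<exists>ms ns :: nat \<Rightarrow> nat.
     inj_on ms {..<L} \<and> inj_on ns {..<L} \<and>
     (\<forall>i<L. ms i < 2 * P \<and> ns i < L * P) \<and>
     (\<Union>i<L div 2. {(ms ((2*i + L - 1) mod L), ns (2*i)), (ms (2*i), ns (2*i)),
                    (ms (2*i), ns (2*i+1)), (ms (2*i+1), ns (2*i+1))})
     = Eset P L s t m'"
proof -
  have "walk_row m' k < 2 * P \<and> walk_col m' k < L * P" if "k < L" for k
    using walk_in_Eset[OF that, of m'] unfolding Eset_def by simp
  then show ?thesis
    using walk_row_inj_on walk_col_inj_on walk_covers_Eset
    by (intro exI[of _ "walk_row m'"] exI[of _ "walk_col m'"]) simp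
qed

end

theorem lemma1:
  fixes P L :: nat and \<sigma> \<tau> :: int
  assumes hP: "P > 2"
    and hs: "0 \<le> \<sigma>" "\<sigma> < int P" and ht: "0 \<le> \<tau>" "\<tau> < int P"
    and i: "zunit P \<sigma>" "zunit P \<tau>"
    and ii: "L = 2 * zord P \<sigma>"
    and iii: "2 \<le> zord P \<sigma>"
    and iv: "zord P \<sigma> \<noteq> card {z. 0 \<le> z \<and> z < int P \<and> zunit P z}"
    and v: "\<forall>j. 1 \<le> j \<and> j < zord P \<sigma> \<longrightarrow> zunit P ((1 - \<sigma> ^ j) mod int P)"
    and vi: "\<tau> \<notin> {\<sigma> ^ k mod int P | k. k < zord P \<sigma>}"
  shows "\<forall>m' < 2 * P. \<exists>ms ns :: nat \<Rightarrow> nat.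
           inj_on ms {..<L} \<and> inj_on ns {..<L} \<and>
           (\<forall>i<L. ms i < 2 * P \<and> ns i < L * P) \<and>
           (\<Union>i<L div 2. {(ms ((2*i + L - 1) mod L), ns (2*i)), (ms (2*i), ns (2*i)),
                          (ms (2*i), ns (2*i+1)), (ms (2*i+1), ns (2*i+1))})
           = Eset P L \<sigma> \<tau> m'"
proof -
  interpret cycle_parameters P \<sigma> \<tau> "zord P \<sigma>"
    using hP i(1) ht v vi by unfold_locales auto
  show ?thesis
    unfolding ii by (intro allI impI) (rule Eset_is_cycle)
qed

end
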